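(* Let $k\ge2$, $q_1,q_2$ positive integers, $m$ a real number, and $\gamma_2=\begin{pmatrix}a&b\\c&d\end{pmatrix}\in\Gamma_0(q_1q_2)$. If $\mathcal P_0\in\mathcal P(k;m,q_1)$, then the polynomial $\mathcal P_0|_{2-k}\gamma_2(x)=(cx+d)^{k-2}\mathcal P_0\!\left(\frac{ax+b}{cx+d}\right)$ also lies in $\mathcal P(k;m,q_1)$.
   Context: $\mathcal P(k;m,q)=\Big\{\sum_{n=0}^{k-2}a_nx^{k-n-2}\in\mathbb Q[x]:\ q^{n+1}a_n\in m\mathbb Z\text{ for all }n\Big\}$, where $m\mathbb Z=\{mt:t\in\mathbb Z\}$. *)

theory Defs
  imports Complex_Main "HOL-Computational_Algebra.Polynomial"
begin

text \<open>The set P(k;m,q): polynomials sum_{n=0}^{k-2} a_n x^(k-n-2) in Q[x]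
  (i.e. degree at most k-2, a_n = coefficient of x^(k-2-n)) with
  q^(n+1) a_n in m Z (as a subset of the reals).\<close>
definition Pset :: "nat \<Rightarrow> real \<Rightarrow> nat \<Rightarrow> rat poly set" where
  "Pset k m q = {p. degree p \<le> k - 2 \<and>
     (\<forall>n \<le> k - 2. \<exists>t::int.
        real_of_rat (of_nat q ^ (n + 1) * coeff p (k - 2 - n)) = m * of_int t)}"

definition Gamma0 :: "int \<Rightarrow> (int \<times> int \<times> int \<times> int) set" where
  "Gamma0 N = {(a, b, c, d). a * d - b * c = 1 \<and> N dvd c}"

end

theory Submission
  imports Defs
begin

text \<open>Substitute x/q for x. The condition defining P(k;m,q) says that q^(k-1) P(x/q) has all
  its coefficients in mZ. Writing p_j for the coefficient of x^j in P, the transform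
  (cx+d)^(k-2) P((ax+b)/(cx+d)) rescales in the same way to
  sum_j q^(k-1-j) p_j (ax+qb)^j ((c/q)x+d)^(k-2-j), and since q divides c this is a combination
  of integer polynomials with coefficients q^(k-1-j) p_j in mZ.\<close>

text \<open>The i-th coefficient of q^e f(x/q).\<close>
definition rescaled_coeff :: "'a::field \<Rightarrow> nat \<Rightarrow> 'a poly \<Rightarrow> nat \<Rightarrow> 'a" where
  "rescaled_coeff q e f i = q ^ e * coeff f i / q ^ i"

definition rescaled_integral :: "'a::field_char_0 \<Rightarrow> nat \<Rightarrow> 'a poly \<Rightarrow> bool" where
  "rescaled_integral q e f \<longleftrightarrow> (\<forall>i. rescaled_coeff q e f i \<in> \<int>)"

lemma rescaled_coeff_mult:
  assumes "q \<noteq> 0"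
  shows "rescaled_coeff q (e1 + e2) (f * g) i =
    (\<Sum>j\<le>i. rescaled_coeff q e1 f j * rescaled_coeff q e2 g (i - j))"
  unfolding rescaled_coeff_def coeff_mult sum_distrib_left sum_divide_distrib
proof (rule sum.cong[OF refl])
  fix j assume "j \<in> {..i}"
  then have "q ^ i = q ^ j * q ^ (i - j)"
    by (simp flip: power_add)
  then show "q ^ (e1 + e2) * (coeff f j * coeff g (i - j)) / q ^ i =
      q ^ e1 * coeff f j / q ^ j * (q ^ e2 * coeff g (i - j) / q ^ (i - j))"
    using assms by (simp add: power_add field_simps)
qed

lemma rescaled_integral_mult:
  assumes "q \<noteq> 0" "rescaled_integral q e1 f" "rescaled_integral q e2 g"
  shows "rescaled_integral q (e1 + e2) (f * g)"
  using assms unfolding rescaled_integral_def rescaled_coeff_mult[OF assms(1)]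
  by (intro allI Ints_sum Ints_mult) auto

lemma rescaled_integral_power:
  assumes "q \<noteq> 0" "rescaled_integral q e f"
  shows "rescaled_integral q (e * n) (f ^ n)"
proof (induction n)
  case 0
  then show ?case by (simp add: rescaled_integral_def rescaled_coeff_def coeff_1)
next
  case (Suc n)
  then show ?case
    using rescaled_integral_mult[OF assms Suc.IH] by simp
qed

lemma rescaled_integral_linear_iff:
  "rescaled_integral q e [:b, a:] \<longleftrightarrow> q ^ e * b \<in> \<int> \<and> q ^ e * a / q \<in> \<int>"
proof
  assume "rescaled_integral q e [:b, a:]"
  then have "rescaled_coeff q e [:b, a:] 0 \<in> \<int>" "rescaled_coeff q e [:b, a:] 1 \<in> \<int>"
    unfolding rescaled_integral_def by blast+
  then show "q ^ e * b \<in> \<int> \<and> q ^ e * a / q \<in> \<int>"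
    by (simp add: rescaled_coeff_def)
next
  assume "q ^ e * b \<in> \<int> \<and> q ^ e * a / q \<in> \<int>"
  then show "rescaled_integral q e [:b, a:]"
    unfolding rescaled_integral_def rescaled_coeff_def
    by (auto simp: coeff_pCons split: nat.split)
qed

definition int_multiples :: "real \<Rightarrow> rat set" where
  "int_multiples m = {r. \<exists>t::int. real_of_rat r = m * of_int t}"

lemma int_multiples_mult_Ints:
  assumes "r \<in> int_multiples m" "z \<in> \<int>"
  shows "r * z \<in> int_multiples m"
proof -
  obtain t where "real_of_rat r = m * of_int t"
    using assms(1) unfolding int_multiples_def by auto
  moreover obtain s where "z = of_int s"
    using assms(2) Ints_cases by blast
  ultimately have "real_of_rat (r * z) = m * of_int (t * s)"
    by (simp add: of_rat_mult)
  then show ?thesis unfolding int_multiples_def by blast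
qed

lemma zero_in_int_multiples: "0 \<in> int_multiples m"
  unfolding int_multiples_def by (auto intro: exI[of _ 0])

lemma int_multiples_add:
  assumes "r \<in> int_multiples m" "s \<in> int_multiples m"
  shows "r + s \<in> int_multiples m"
proof -
  obtain t u where "real_of_rat r = m * of_int t" "real_of_rat s = m * of_int u"
    using assms unfolding int_multiples_def by auto
  then have "real_of_rat (r + s) = m * of_int (t + u)"
    by (simp add: of_rat_add algebra_simps)
  then show ?thesis unfolding int_multiples_def by blast
qed

lemma int_multiples_sum:
  "(\<And>x. x \<in> A \<Longrightarrow> f x \<in> int_multiples m) \<Longrightarrow> sum f A \<in> int_multiples m"
  by (induction A rule: infinite_finite_induct)
    (auto intro: zero_in_int_multiples int_multiples_add)

lemma Pset_iff_rescaled_coeff: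
  assumes "q > 0"
  shows "P \<in> Pset k m q \<longleftrightarrow> degree P \<le> k - 2 \<and>
    (\<forall>i. rescaled_coeff (of_nat q) (Suc (k - 2)) P i \<in> int_multiples m)"
proof -
  have shift: "rescaled_coeff (of_nat q) (Suc (k - 2)) P (k - 2 - n) =
      of_nat q ^ (n + 1) * coeff P (k - 2 - n)" if "n \<le> k - 2" for n
  proof -
    have "Suc (k - 2) = (n + 1) + (k - 2 - n)"
      using that by simp
    then have "(of_nat q :: rat) ^ Suc (k - 2) = of_nat q ^ (n + 1) * of_nat q ^ (k - 2 - n)"
      by (metis power_add)
    then show ?thesis
      using assms by (simp add: rescaled_coeff_def)
  qed
  show ?thesis
  proof
    assume P: "P \<in> Pset k m q"
    have "rescaled_coeff (of_nat q) (Suc (k - 2)) P i \<in> int_multiples m" for i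
    proof (cases "i \<le> k - 2")
      case True
      define n where "n = k - 2 - i"
      have n: "n \<le> k - 2" and i: "i = k - 2 - n"
        using True unfolding n_def by simp_all
      show ?thesis
        using P n unfolding i shift[OF n] Pset_def int_multiples_def by blast
    next
      case False
      then show ?thesis
        using P by (simp add: Pset_def rescaled_coeff_def coeff_eq_0 zero_in_int_multiples)
    qed
    then show "degree P \<le> k - 2 \<and>
        (\<forall>i. rescaled_coeff (of_nat q) (Suc (k - 2)) P i \<in> int_multiples m)"
      using P unfolding Pset_def by blast
  next
    assume P: "degree P \<le> k - 2 \<and>
        (\<forall>i. rescaled_coeff (of_nat q) (Suc (k - 2)) P i \<in> int_multiples m)"
    have "\<exists>t::int. real_of_rat (of_nat q ^ (n + 1) * coeff P (k - 2 - n)) = m * of_int t"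
      if n: "n \<le> k - 2" for n
      using P unfolding shift[OF n, symmetric] int_multiples_def by blast
    then show "P \<in> Pset k m q"
      using P unfolding Pset_def by blast
  qed
qed

definition slash_poly :: "nat \<Rightarrow> 'a::comm_ring_1 \<Rightarrow> 'a \<Rightarrow> 'a \<Rightarrow> 'a \<Rightarrow> 'a poly \<Rightarrow> 'a poly" where
  "slash_poly K a b c d P = (\<Sum>j\<le>K. smult (coeff P j) ([:b, a:] ^ j * [:d, c:] ^ (K - j)))"

lemma degree_slash_poly_le: "degree (slash_poly K a b c d P) \<le> K"
  unfolding slash_poly_def
proof (rule degree_sum_le)
  fix j assume j: "j \<in> {..K}"
  have "degree ([:b, a:] ^ j * [:d, c:] ^ (K - j)) \<le> j * 1 + (K - j) * 1"
    by (intro order.trans[OF degree_mult_le] add_mono order.trans[OF degree_power_le]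
        mult_left_mono) auto
  then show "degree (smult (coeff P j) ([:b, a:] ^ j * [:d, c:] ^ (K - j))) \<le> K"
    using j degree_smult_le order_trans by fastforce
qed simp

lemma poly_slash_poly:
  fixes x :: "'a::field"
  assumes "degree P \<le> K" and x: "c * x + d \<noteq> 0"
  shows "poly (slash_poly K a b c d P) x = (c * x + d) ^ K * poly P ((a * x + b) / (c * x + d))"
proof -
  define y where "y = (a * x + b) / (c * x + d)"
  have poly_P: "poly P y = (\<Sum>j\<le>K. coeff P j * y ^ j)"
    unfolding poly_altdef
    using assms(1) by (intro sum.mono_neutral_left) (auto simp: coeff_eq_0)
  have "(c * x + d) ^ K * poly P y =
      (\<Sum>j\<le>K. coeff P j * ((a * x + b) ^ j * (c * x + d) ^ (K - j)))"
    unfolding poly_P sum_distrib_left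
  proof (intro sum.cong refl)
    fix j assume "j \<in> {..K}"
    then have "(c * x + d) ^ K = (c * x + d) ^ j * (c * x + d) ^ (K - j)"
      by (simp flip: power_add)
    then show "(c * x + d) ^ K * (coeff P j * y ^ j) =
        coeff P j * ((a * x + b) ^ j * (c * x + d) ^ (K - j))"
      using x unfolding y_def by (simp add: power_divide field_simps)
  qed
  then show ?thesis
    unfolding slash_poly_def poly_sum y_def by (simp add: algebra_simps)
qed

lemma rescaled_coeff_slash_poly_in_int_multiples:
  fixes P :: "rat poly"
  assumes q: "q \<in> \<int>" "q \<noteq> 0"
    and ints: "a \<in> \<int>" "b \<in> \<int>" "c / q \<in> \<int>" "d \<in> \<int>"
    and P: "\<And>j. rescaled_coeff q (Suc K) P j \<in> int_multiples m"
  shows "rescaled_coeff q (Suc K) (slash_poly K a b c d P) i \<in> int_multiples m"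
proof -
  have integral: "rescaled_integral q j ([:b, a:] ^ j * [:d, c:] ^ (K - j))" for j
  proof -
    have "rescaled_integral q 1 [:b, a:]" "rescaled_integral q 0 [:d, c:]"
      using q ints by (simp_all add: rescaled_integral_linear_iff Ints_mult)
    then have "rescaled_integral q (1 * j + 0 * (K - j)) ([:b, a:] ^ j * [:d, c:] ^ (K - j))"
      by (intro rescaled_integral_mult rescaled_integral_power q(2))
    then show ?thesis
      by simp
  qed
  have "rescaled_coeff q (Suc K) (slash_poly K a b c d P) i =
      (\<Sum>j\<le>K. rescaled_coeff q (Suc K) P j *
               rescaled_coeff q j ([:b, a:] ^ j * [:d, c:] ^ (K - j)) i)"
    unfolding slash_poly_def rescaled_coeff_def coeff_sum coeff_smult
      sum_distrib_left sum_divide_distrib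
    using q(2) by (intro sum.cong refl) (simp add: field_simps)
  also have "\<dots> \<in> int_multiples m"
    using P integral unfolding rescaled_integral_def
    by (intro int_multiples_sum int_multiples_mult_Ints) auto
  finally show ?thesis .
qed

theorem lemma6p2:
  fixes k q1 q2 :: nat and m :: real and a b c d :: int and P0 :: "rat poly"
  assumes "k \<ge> 2" and "q1 > 0" and "q2 > 0"
    and "(a, b, c, d) \<in> Gamma0 (int (q1 * q2))"
    and "P0 \<in> Pset k m q1"
  shows "\<exists>Q \<in> Pset k m q1. \<forall>x::rat. of_int c * x + of_int d \<noteq> 0 \<longrightarrow>
           poly Q x = (of_int c * x + of_int d) ^ (k - 2) *
                      poly P0 ((of_int a * x + of_int b) / (of_int c * x + of_int d))"
proof -
  let ?Q = "slash_poly (k - 2) (of_int a) (of_int b) (of_int c) (of_int d) P0"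
  have P0: "degree P0 \<le> k - 2"
    "\<And>i. rescaled_coeff (of_nat q1) (Suc (k - 2)) P0 i \<in> int_multiples m"
    using assms(5) Pset_iff_rescaled_coeff[OF assms(2)] by auto
  have "int q1 dvd c"
    using assms(4) unfolding Gamma0_def by (auto intro: dvd_trans[of _ "int (q1 * q2)"])
  then obtain c' where "c = int q1 * c'" ..
  then have "(of_int c :: rat) / of_nat q1 \<in> \<int>"
    using assms(2) by simp
  then have "rescaled_coeff (of_nat q1) (Suc (k - 2)) ?Q i \<in> int_multiples m" for i
    using assms(2) P0(2) by (intro rescaled_coeff_slash_poly_in_int_multiples) auto
  then have "?Q \<in> Pset k m q1"
    using assms(2) degree_slash_poly_le Pset_iff_rescaled_coeff by blast
  then show ?thesis
    using poly_slash_poly[OF P0(1)] by blast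
qed

end
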